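(* Let $S$ be a closed convex subset of $\mathbb{R}^p$ and let $x,y\in S$. Then for any $u\in N_S(x)$ and $v\in N_S(y)$, $$(u-v)^{T}(x-y)\le-2r(|u|+|v|),$$ where $r:=\inf_{w\in\partial S}|c-w|$ is the distance from the midpoint $c:=\tfrac12(x+y)$ to the boundary $\partial S$. Moreover, if $S$ is strongly convex with strong convexity constant $R\in(0,\infty)$, then $$(u-v)^{T}(x-y)\le-\frac{1}{2R}(|u|+|v|)|x-y|^2.$$
   Context: $N_S(u):=\{s\in\mathbb{R}^p:\inf_{z\in S}s^{T}(z-u)\ge0\}$ is the inward normal cone of $S$ at $u$; $|\cdot|$ is the Euclidean norm and $\mathbb{S}_p$ the unit sphere. For $S$ convex, its strong convexity constant is $$R:=\inf\Big\{r\ge0:\ S\subset\bigcap_{u\in\partial S,\ v\in N_S(u)\cap\mathbb{S}_p}\overline{B}_r(u+rv)\Big\},$$ where $\overline{B}_r(c)$ is the closed Euclidean ball of radius $r$ centred at $c$; $S$ is called strongly convex if $R$ is finite. *)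

theory Defs
  imports "HOL-Analysis.Analysis"
begin

text \<open>Inward normal cone of S at u: all s with s . (z - u) >= 0 for every z in S
  (equivalently inf over z in S of s . (z - u) >= 0).\<close>
definition normal_cone :: "'a::euclidean_space set \<Rightarrow> 'a \<Rightarrow> 'a set" where
  "normal_cone S u = {s. \<forall>z\<in>S. s \<bullet> (z - u) \<ge> 0}"

text \<open>Strong convexity constant, as an extended real (Inf of the empty set is +infinity).\<close>
definition strong_convexity_constant :: "'a::euclidean_space set \<Rightarrow> ereal" where
  "strong_convexity_constant S =
     Inf (ereal ` {r. r \<ge> 0 \<and>
        S \<subseteq> (\<Inter>u\<in>frontier S. \<Inter>v\<in>normal_cone S u \<inter> sphere 0 1. cball (u + r *\<^sub>R v) r)})"

end

theory Submission
  imports Defs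
begin

text \<open>
  A normal vector u at x \<in> S satisfies u \<bullet> (z - x) \<ge> 0 on S; if S contains the closed ball of
  radius r around c, testing with z = c - r u / |u| gives u \<bullet> (c - x) \<ge> r |u|. For the first
  bound take c the midpoint of x and y and r its distance to the frontier (the ball of that
  radius lies in S by connectedness), and add the estimates at x and at y. For the second,
  x lies on the frontier whenever u \<noteq> 0, so y lies in the ball of radius R' centred at
  x + R' u / |u|, for every admissible radius R'; expanding the square yields
  |u| |y - x|^2 \<le> 2 R' u \<bullet> (y - x), and R' may be pushed down to the infimum R.
\<close>

lemma normal_cone_inner_nonneg:
  assumes "u \<in> normal_cone S x" "z \<in> S"
  shows "0 \<le> u \<bullet> (z - x)"
  using assms unfolding normal_cone_def by auto

lemma normal_cone_scaleR:
  assumes "u \<in> normal_cone S x" "0 \<le> a"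
  shows "a *\<^sub>R u \<in> normal_cone S x"
  using assms unfolding normal_cone_def by simp

lemma normal_cone_inner_ge_radius:
  assumes u: "u \<in> normal_cone S x" and ball: "cball c r \<subseteq> S" and "0 \<le> r"
  shows "r * norm u \<le> u \<bullet> (c - x)"
proof (cases "u = 0")
  case False
  define z where "z = c - (r / norm u) *\<^sub>R u"
  have "z \<in> S"
    using ball \<open>0 \<le> r\<close> False by (auto simp: z_def dist_norm)
  with u have "0 \<le> u \<bullet> (z - x)"
    by (rule normal_cone_inner_nonneg)
  also have "u \<bullet> (z - x) = u \<bullet> (c - x) - r * norm u"
    using False by (simp add: z_def inner_diff_right dot_square_norm power2_eq_square)
  finally show ?thesis by simp
qed (use u ball \<open>0 \<le> r\<close> normal_cone_inner_nonneg in auto)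

lemma normal_cone_nonzero_imp_frontier:
  assumes "u \<in> normal_cone S x" "x \<in> S" "u \<noteq> 0"
  shows "x \<in> frontier S"
proof -
  have "x \<notin> interior S"
  proof
    assume "x \<in> interior S"
    then obtain e where "0 < e" "cball x e \<subseteq> S"
      by (auto simp: mem_interior_cball)
    then have "e * norm u \<le> 0"
      using normal_cone_inner_ge_radius[OF assms(1)] by fastforce
    with \<open>0 < e\<close> \<open>u \<noteq> 0\<close> show False
      by (simp add: mult_le_0_iff)
  qed
  with assms(2) show ?thesis
    by (simp add: frontier_def closure_subset[THEN subsetD])
qed

lemma cball_infdist_frontier_subset:
  fixes S :: "'a::real_normed_vector set"
  assumes "closed S" "c \<in> S"
  shows "cball c (infdist c (frontier S)) \<subseteq> S"
proof (cases "infdist c (frontier S) = 0")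
  case False
  define r where "r = infdist c (frontier S)"
  have "0 < r"
    using False infdist_nonneg[of c "frontier S"] by (simp add: r_def)
  have "ball c r \<inter> frontier S = {}"
    using infdist_le[of _ "frontier S" c] by (fastforce simp: r_def)
  moreover have "ball c r \<inter> S \<noteq> {}"
    using \<open>c \<in> S\<close> \<open>0 < r\<close> centre_in_ball by blast
  ultimately have "ball c r \<subseteq> S"
    using connected_Int_frontier[OF connected_ball, of c r S] by auto
  then have "closure (ball c r) \<subseteq> S"
    using \<open>closed S\<close> by (rule closure_minimal)
  with \<open>0 < r\<close> show ?thesis
    by (simp add: r_def)
qed (use \<open>c \<in> S\<close> in simp)

lemma normal_cone_inner_ge_infdist_midpoint:
  fixes S :: "'a::euclidean_space set"
  assumes "closed S" "convex S" "x \<in> S" "y \<in> S" "u \<in> normal_cone S x"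
  shows "2 * infdist ((1/2) *\<^sub>R (x + y)) (frontier S) * norm u \<le> u \<bullet> (y - x)"
proof -
  define c where "c = (1/2) *\<^sub>R (x + y)"
  have "c \<in> S"
    using convexD[OF \<open>convex S\<close> \<open>x \<in> S\<close> \<open>y \<in> S\<close>, of "1/2" "1/2"]
    by (simp add: c_def scaleR_right_distrib)
  then have "infdist c (frontier S) * norm u \<le> u \<bullet> (c - x)"
    using normal_cone_inner_ge_radius[OF assms(5) cball_infdist_frontier_subset[OF \<open>closed S\<close>]]
    by (simp add: infdist_nonneg)
  also have "u \<bullet> (c - x) = (1/2) * (u \<bullet> (y - x))"
    by (simp add: c_def algebra_simps inner_diff_right inner_add_right)
  finally show ?thesis
    by (simp add: c_def)
qed

definition supporting_ball_radii :: "'a::euclidean_space set \<Rightarrow> real set" where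
  "supporting_ball_radii S = {r. r \<ge> 0 \<and>
     S \<subseteq> (\<Inter>u\<in>frontier S. \<Inter>v\<in>normal_cone S u \<inter> sphere 0 1. cball (u + r *\<^sub>R v) r)}"

lemma strong_convexity_constant_eq_Inf_radii:
  "strong_convexity_constant S = Inf (ereal ` supporting_ball_radii S)"
  unfolding strong_convexity_constant_def supporting_ball_radii_def ..

lemma supporting_ball_radii_bound:
  fixes S :: "'a::euclidean_space set"
  assumes r: "r \<in> supporting_ball_radii S"
    and "x \<in> S" "y \<in> S" "u \<in> normal_cone S x"
  shows "norm u * (norm (y - x))\<^sup>2 \<le> 2 * r * (u \<bullet> (y - x))"
proof (cases "u = 0")
  case False
  define w where "w = (1 / norm u) *\<^sub>R u"
  have "norm w = 1"
    using False by (simp add: w_def)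
  have "x \<in> frontier S"
    using normal_cone_nonzero_imp_frontier assms(2-4) False by blast
  moreover have "w \<in> normal_cone S x \<inter> sphere 0 1"
    using normal_cone_scaleR[OF assms(4)] \<open>norm w = 1\<close> by (simp add: w_def)
  ultimately have "y \<in> cball (x + r *\<^sub>R w) r"
    using r \<open>y \<in> S\<close> unfolding supporting_ball_radii_def by blast
  then have "(norm ((y - x) - r *\<^sub>R w))\<^sup>2 \<le> r\<^sup>2"
    by (simp add: dist_norm norm_minus_commute diff_diff_eq power_mono)
  moreover have "(norm ((y - x) - r *\<^sub>R w))\<^sup>2 = (norm (y - x))\<^sup>2 - 2 * r * (w \<bullet> (y - x)) + r\<^sup>2"
    using \<open>norm w = 1\<close> unfolding power2_norm_eq_inner
    by (simp add: norm_eq_1 inner_diff_left inner_diff_right inner_commute algebra_simps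
        power2_eq_square)
  ultimately have "(norm (y - x))\<^sup>2 \<le> 2 * r * (w \<bullet> (y - x))"
    by simp
  then have "norm u * (norm (y - x))\<^sup>2 \<le> norm u * (2 * r * (w \<bullet> (y - x)))"
    by (simp add: mult_left_mono)
  also have "\<dots> = 2 * r * (u \<bullet> (y - x))"
    using False by (simp add: w_def)
  finally show ?thesis .
qed simp

lemma ereal_Inf_ge_bound:
  assumes "Inf (ereal ` A) = ereal R" "\<And>r. r \<in> A \<Longrightarrow> b \<le> r * a" "0 \<le> a"
  shows "b \<le> R * a"
proof (cases "a = 0")
  case True
  have "A \<noteq> {}"
    using assms(1) by (auto simp: top_ereal_def)
  with assms(2) True show ?thesis by auto
next
  case False
  with \<open>0 \<le> a\<close> have "0 < a" by simp
  have "ereal (b / a) \<le> Inf (ereal ` A)"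
    using assms(2) \<open>0 < a\<close> by (auto intro!: Inf_greatest simp: divide_le_eq)
  with assms(1) \<open>0 < a\<close> show ?thesis
    by (simp add: divide_le_eq)
qed

lemma strong_convexity_constant_bound:
  fixes S :: "'a::euclidean_space set"
  assumes "strong_convexity_constant S = ereal R"
    and "x \<in> S" "y \<in> S" "u \<in> normal_cone S x"
  shows "norm u * (norm (y - x))\<^sup>2 \<le> 2 * R * (u \<bullet> (y - x))"
proof -
  have "norm u * (norm (y - x))\<^sup>2 / 2 \<le> R * (u \<bullet> (y - x))"
  proof (rule ereal_Inf_ge_bound)
    show "Inf (ereal ` supporting_ball_radii S) = ereal R"
      using assms(1) by (simp add: strong_convexity_constant_eq_Inf_radii)
    show "norm u * (norm (y - x))\<^sup>2 / 2 \<le> r * (u \<bullet> (y - x))" if "r \<in> supporting_ball_radii S" for r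
      using supporting_ball_radii_bound[OF that assms(2-4)] by simp
    show "0 \<le> u \<bullet> (y - x)"
      using assms(4,3) by (rule normal_cone_inner_nonneg)
  qed
  then show ?thesis by simp
qed

theorem lemma2:
  fixes S :: "'a::euclidean_space set" and x y u v :: 'a
  assumes "closed S" and "convex S"
    and "x \<in> S" and "y \<in> S"
    and "u \<in> normal_cone S x" and "v \<in> normal_cone S y"
  shows "(u - v) \<bullet> (x - y)
           \<le> - 2 * infdist ((1/2) *\<^sub>R (x + y)) (frontier S) * (norm u + norm v)
         \<and> (\<forall>R. strong_convexity_constant S = ereal R \<and> 0 < R \<longrightarrow>
           (u - v) \<bullet> (x - y) \<le> - (1 / (2 * R)) * (norm u + norm v) * (norm (x - y))\<^sup>2)"
proof (intro conjI allI impI)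
  have split: "(u - v) \<bullet> (x - y) = - (u \<bullet> (y - x)) - v \<bullet> (x - y)"
    by (simp add: inner_diff_left inner_diff_right)
  have "2 * infdist ((1/2) *\<^sub>R (x + y)) (frontier S) * norm u \<le> u \<bullet> (y - x)"
    using normal_cone_inner_ge_infdist_midpoint[OF assms(1-5)] .
  moreover have "2 * infdist ((1/2) *\<^sub>R (x + y)) (frontier S) * norm v \<le> v \<bullet> (x - y)"
    using normal_cone_inner_ge_infdist_midpoint[OF assms(1,2,4,3,6)] by (simp add: add.commute)
  ultimately show "(u - v) \<bullet> (x - y)
      \<le> - 2 * infdist ((1/2) *\<^sub>R (x + y)) (frontier S) * (norm u + norm v)"
    unfolding split by (simp add: algebra_simps)
  fix R assume R: "strong_convexity_constant S = ereal R \<and> 0 < R"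
  have "norm u * (norm (x - y))\<^sup>2 \<le> 2 * R * (u \<bullet> (y - x))"
    using strong_convexity_constant_bound[OF _ assms(3,4,5)] R by (simp add: norm_minus_commute)
  moreover have "norm v * (norm (x - y))\<^sup>2 \<le> 2 * R * (v \<bullet> (x - y))"
    using strong_convexity_constant_bound[OF _ assms(4,3,6)] R by simp
  ultimately have "(norm u + norm v) * (norm (x - y))\<^sup>2 \<le> 2 * R * - ((u - v) \<bullet> (x - y))"
    unfolding split by (simp add: algebra_simps)
  with R show "(u - v) \<bullet> (x - y) \<le> - (1 / (2 * R)) * (norm u + norm v) * (norm (x - y))\<^sup>2"
    by (simp add: field_simps)
qed

end
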